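(* If $m$ is even, then $\mathrm{U}_m-\mathrm{U}_m^\top$ is invertible with inverse $(\mathrm{U}_m-\mathrm{U}_m^\top)^{-1}=\mathrm{Q}_m(\mathrm{U}_m-\mathrm{U}_m^\top)\mathrm{Q}_m$.
   Context: $\mathrm{U}_m\in\mathbb{R}^{m\times m}$ is the strictly upper triangular matrix with all entries above the diagonal equal to $1$, and $\mathrm{Q}_m$ is the $m\times m$ diagonal matrix with diagonal entries $(-1)^{i+1}$, $i=1,\dots,m$. *)

theory Defs
  imports "Jordan_Normal_Form.Matrix" "Jordan_Normal_Form.Determinant"
begin

definition U_mat :: "nat \<Rightarrow> real mat" where
  "U_mat m = mat m m (\<lambda>(i, j). if i < j then 1 else 0)"

text \<open>Q_m: diagonal matrix with entries (-1)^(i+1) for 1-based i, i.e. (-1)^i for 0-based i.\<close>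
definition Q_mat :: "nat \<Rightarrow> real mat" where
  "Q_mat m = mat m m (\<lambda>(i, j). if i = j then (-1) ^ i else 0)"

end

theory Submission
  imports Defs
begin

text \<open>Let S = U_m - U_m^T, whose entries are sgn (j - i), and Q = Q_m. Since Q^2 = 1,
  it suffices to show S Q S = Q: then S (Q S Q) = (S Q S) Q = 1 and (Q S Q) S = Q (S Q S) = 1.
  The (i, k) entry of S Q S is the alternating sum of sgn (j - i) sgn (k - j) over j < m. For
  i < k this product is [i \<le> j < k] + [i < j \<le> k] - 1; the two interval sums cancel after a
  shift of the index, and the sum of (-1)^j over j < m vanishes because m is even.\<close>

definition sgn_diff :: "nat \<Rightarrow> nat \<Rightarrow> 'a :: ring_1" where
  "sgn_diff i j = (if i < j then 1 else if j < i then -1 else 0)"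

definition sgn_diff_mat :: "nat \<Rightarrow> 'a :: ring_1 mat" where
  "sgn_diff_mat m = mat m m (\<lambda>(i, j). sgn_diff i j)"

lemma sum_neg_one_power_even:
  assumes "even m"
  shows "(\<Sum>j<m. (-1 :: 'a :: ring_1) ^ j) = 0"
proof -
  obtain n where "m = 2 * n" using assms by blast
  then show ?thesis by (induction n arbitrary: m) simp_all
qed

lemma sgn_diff_mult_sgn_diff_less:
  assumes "i < k"
  shows "sgn_diff i j * sgn_diff j k =
    (of_bool (i \<le> j \<and> j < k) + of_bool (i < j \<and> j \<le> k) - 1 :: 'a :: ring_1)"
  using assms by (auto simp: sgn_diff_def)

lemma alternating_sum_sgn_diff_less:
  assumes "i < k" "k < m" "even m"
  shows "(\<Sum>j<m. sgn_diff i j * (-1) ^ j * sgn_diff j k) = (0 :: 'a :: comm_ring_1)"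
proof -
  have intervals: "{..<m} \<inter> {j. i \<le> j \<and> j < k} = {i..<k}"
       "{..<m} \<inter> {j. i < j \<and> j \<le> k} = {Suc i..<Suc k}"
    using assms by auto
  have "sgn_diff i j * (-1) ^ j * sgn_diff j k =
      (-1 :: 'a) ^ j * (of_bool (i \<le> j \<and> j < k) + of_bool (i < j \<and> j \<le> k) - 1)" for j
    by (metis sgn_diff_mult_sgn_diff_less[OF assms(1)] mult.commute mult.left_commute)
  then have "(\<Sum>j<m. sgn_diff i j * (-1) ^ j * sgn_diff j k) =
      (\<Sum>j=i..<k. (-1 :: 'a) ^ j) + (\<Sum>j=Suc i..<Suc k. (-1) ^ j) - (\<Sum>j<m. (-1) ^ j)"
    by (simp add: ring_distribs sum.distrib sum_subtractf intervals)
  also have "(\<Sum>j=Suc i..<Suc k. (-1 :: 'a) ^ j) = - (\<Sum>j=i..<k. (-1) ^ j)"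
    unfolding sum.shift_bounds_Suc_ivl by (simp add: sum_negf)
  finally show ?thesis using assms(3) by (simp add: sum_neg_one_power_even)
qed

lemma alternating_sum_sgn_diff_self:
  assumes "i < m" "even m"
  shows "(\<Sum>j<m. sgn_diff i j * (-1) ^ j * sgn_diff j i) = ((-1) ^ i :: 'a :: comm_ring_1)"
proof -
  have "sgn_diff i j * (-1) ^ j * sgn_diff j i = (-1 :: 'a) ^ j * of_bool (j = i) - (-1) ^ j" for j
    by (auto simp: sgn_diff_def)
  then show ?thesis using assms by (simp add: sum_subtractf sum_neg_one_power_even)
qed

lemma alternating_sum_sgn_diff:
  assumes "i < m" "k < m" "even m"
  shows "(\<Sum>j<m. sgn_diff i j * (-1) ^ j * sgn_diff j k) =
    (of_bool (i = k) * (-1) ^ i :: 'a :: comm_ring_1)"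
proof (cases i k rule: linorder_cases)
  case less
  then show ?thesis using alternating_sum_sgn_diff_less assms by simp
next
  case equal
  then show ?thesis using alternating_sum_sgn_diff_self assms by simp
next
  case greater
  have "(\<Sum>j<m. sgn_diff i j * (-1) ^ j * sgn_diff j k) =
      (\<Sum>j<m. sgn_diff k j * (-1 :: 'a) ^ j * sgn_diff j i)"
    by (intro sum.cong) (auto simp: sgn_diff_def)
  then show ?thesis using alternating_sum_sgn_diff_less[OF greater assms(1,3)] greater by simp
qed

lemma sgn_diff_mat_carrier [simp]: "sgn_diff_mat m \<in> carrier_mat m m"
  by (simp add: sgn_diff_mat_def)

lemma sgn_diff_mat_alternating_sandwich:
  assumes "even m"
  shows "sgn_diff_mat m * mat_diag m (\<lambda>i. (-1) ^ i) * sgn_diff_mat m =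
    (mat_diag m (\<lambda>i. (-1) ^ i) :: 'a :: comm_ring_1 mat)"
proof -
  have "sgn_diff_mat m * mat_diag m (\<lambda>i. (-1) ^ i) =
      (mat m m (\<lambda>(i, j). sgn_diff i j * (-1) ^ j) :: 'a mat)"
    by (rule eq_matI) (auto simp: mat_diag_mult_right[of _ m m] sgn_diff_mat_def)
  also have "\<dots> * sgn_diff_mat m = mat_diag m (\<lambda>i. (-1) ^ i)"
    by (rule eq_matI)
      (auto simp: sgn_diff_mat_def mat_diag_def scalar_prod_def atLeast0LessThan
        alternating_sum_sgn_diff assms)
  finally show ?thesis .
qed

lemma conj_involution_inverts_mat:
  fixes A Q :: "'a :: semiring_1 mat"
  assumes A: "A \<in> carrier_mat n n" and Q: "Q \<in> carrier_mat n n"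
    and "Q * Q = 1\<^sub>m n" and "A * Q * A = Q"
  shows "invertible_mat A" "inverts_mat A (Q * A * Q)" "inverts_mat (Q * A * Q) A"
proof -
  have "A * (Q * A * Q) = (A * Q * A) * Q" "(Q * A * Q) * A = Q * (A * Q * A)"
    by (metis A Q assoc_mult_mat mult_carrier_mat)+
  then show "inverts_mat A (Q * A * Q)" "inverts_mat (Q * A * Q) A"
    using assms by (simp_all add: inverts_mat_def)
  then show "invertible_mat A"
    using A by (auto simp: invertible_mat_def)
qed

lemma U_mat_minus_transpose: "U_mat m - (U_mat m)\<^sup>T = sgn_diff_mat m"
  by (rule eq_matI) (auto simp: U_mat_def sgn_diff_mat_def sgn_diff_def)

lemma Q_mat_eq_mat_diag: "Q_mat m = mat_diag m (\<lambda>i. (-1) ^ i)"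
  by (rule eq_matI) (auto simp: Q_mat_def mat_diag_def)

lemma Q_mat_mult_Q_mat: "Q_mat m * Q_mat m = 1\<^sub>m m"
  by (simp add: Q_mat_eq_mat_diag flip: power_mult_distrib)

theorem corollary7p5:
  fixes m :: nat
  assumes "even m"
  shows "invertible_mat (U_mat m - (U_mat m)\<^sup>T) \<and>
         inverts_mat (U_mat m - (U_mat m)\<^sup>T) (Q_mat m * (U_mat m - (U_mat m)\<^sup>T) * Q_mat m) \<and>
         inverts_mat (Q_mat m * (U_mat m - (U_mat m)\<^sup>T) * Q_mat m) (U_mat m - (U_mat m)\<^sup>T)"
proof -
  have "sgn_diff_mat m * Q_mat m * sgn_diff_mat m = Q_mat m"
    unfolding Q_mat_eq_mat_diag by (rule sgn_diff_mat_alternating_sandwich[OF assms])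
  then show ?thesis
    unfolding U_mat_minus_transpose
    using conj_involution_inverts_mat[of "sgn_diff_mat m" m "Q_mat m"] Q_mat_mult_Q_mat
    by (simp add: Q_mat_eq_mat_diag)
qed

end
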